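(* Let $X$ and $Y$ be metric spaces, and suppose that $Y$ is $\mathcal P$-connected and locally $\mathcal P$-contractible for some family $\mathcal P$ of paths. Then every weakly proper local homeomorphism $f:X\to Y$ is a covering projection.
   Context: A family $\mathcal P$ of continuous paths $p:[0,1]\to Y$ in a metric space $Y$ is given. $Y$ is $\mathcal P$-connected if (i) whenever $p\in\mathcal P$, the reverse path $\bar p(t)=p(1-t)$ belongs to $\mathcal P$, and (ii) every two points of $Y$ can be joined by a path in $\mathcal P$. $Y$ is locally $\mathcal P$-contractible if every $y_0\in Y$ has an open neighborhood $U$ with a continuous homotopy $H:U\times[0,1]\to U$ such that $H(y_0,t)=y_0$ for all $t$, $H(y,0)=y_0$ and $H(y,1)=y$ for all $y\in U$, and for every $y\in U$ the path $t\mapsto H(y,t)$ belongs to $\mathcal P$. A continuous map $f:X\to Y$ is weakly proper if for every compact $K\subset Y$, each connected component of $f^{-1}(K)$ is compact in $X$. *)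

theory Defs
  imports "HOL-Analysis.Analysis"
begin

text \<open>Paths are functions real => 'b; only their values on [0,1] matter.
  A path p on [0,1] "is in" the family P if some member of P agrees with it on [0,1].\<close>

definition path_in_family :: "(real \<Rightarrow> 'b) set \<Rightarrow> (real \<Rightarrow> 'b) \<Rightarrow> bool" where
  "path_in_family P p \<longleftrightarrow> (\<exists>q\<in>P. \<forall>t\<in>{0..1}. q t = p t)"

definition P_connected :: "(real \<Rightarrow> 'b::topological_space) set \<Rightarrow> 'b set \<Rightarrow> bool" where
  "P_connected P Y \<longleftrightarrow>
     (\<forall>p\<in>P. path_in_family P (reversepath p)) \<and>
     (\<forall>x\<in>Y. \<forall>y\<in>Y. \<exists>p\<in>P. p 0 = x \<and> p 1 = y)"

definition locally_P_contractible :: "(real \<Rightarrow> 'b::topological_space) set \<Rightarrow> 'b set \<Rightarrow> bool" where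
  "locally_P_contractible P Y \<longleftrightarrow>
     (\<forall>y0\<in>Y. \<exists>U H. openin (top_of_set Y) U \<and> y0 \<in> U \<and>
        continuous_on (U \<times> {0..1::real}) H \<and> H ` (U \<times> {0..1}) \<subseteq> U \<and>
        (\<forall>t\<in>{0..1}. H (y0, t) = y0) \<and>
        (\<forall>y\<in>U. H (y, 0) = y0 \<and> H (y, 1) = y) \<and>
        (\<forall>y\<in>U. path_in_family P (\<lambda>t. H (y, t))))"

definition weakly_proper :: "'a::topological_space set \<Rightarrow> ('a \<Rightarrow> 'b::topological_space) \<Rightarrow> 'b set \<Rightarrow> bool" where
  "weakly_proper X f Y \<longleftrightarrow> continuous_on X f \<and> f ` X \<subseteq> Y \<and>
     (\<forall>K. compact K \<and> K \<subseteq> Y \<longrightarrow>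
        (\<forall>x \<in> X \<inter> f -` K. compact (connected_component_set (X \<inter> f -` K) x)))"

definition local_homeomorphism :: "'a::topological_space set \<Rightarrow> ('a \<Rightarrow> 'b::topological_space) \<Rightarrow> 'b set \<Rightarrow> bool" where
  "local_homeomorphism X f Y \<longleftrightarrow> continuous_on X f \<and> f ` X \<subseteq> Y \<and>
     (\<forall>x\<in>X. \<exists>T U g. x \<in> T \<and> openin (top_of_set X) T \<and> openin (top_of_set Y) U \<and>
        homeomorphism T U f g)"

end

theory Submission
  imports Defs
begin

text \<open>Lifts of paths through a local homeomorphism \<open>f\<close> are unique, because two lifts agree on
  a clopen subset of their connected domain. Weak properness makes them exist: partial lifts of a
  path \<open>p\<close> from \<open>x\<close> stay in the compact component of \<open>X \<inter> f -` path_image p\<close> through \<open>x\<close>, so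
  their endpoints accumulate over the supremum of the liftable times, and a chart there continues
  the lift past it. Running the same continuation argument uniformly in a parameter, lifts of a
  continuous family of paths form a continuous family. Now contract a neighbourhood \<open>U\<close> of \<open>y0\<close>
  onto \<open>y0\<close> and lift the contraction paths from a point \<open>x\<close> over \<open>y0\<close>: their endpoints form a
  continuous section of \<open>f\<close> over \<open>U\<close>. The images of these sections, one for each \<open>x\<close>, are open,
  pairwise disjoint by uniqueness of lifts, and exhaust \<open>f -` U\<close>. Surjectivity of \<open>f\<close> comes from
  lifting the paths of \<open>P\<close>.\<close>

lemma continuous_on_open_localI:
  assumes "\<And>x. x \<in> S \<Longrightarrow> \<exists>W. open W \<and> x \<in> W \<and> continuous_on (S \<inter> W) g"
  shows "continuous_on S g"
  unfolding continuous_on_topological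
proof (intro ballI allI impI)
  fix x B assume "x \<in> S" "open B" "g x \<in> B"
  obtain W where W: "open W" "x \<in> W" "continuous_on (S \<inter> W) g"
    using assms \<open>x \<in> S\<close> by blast
  then obtain A where "open A" "x \<in> A" "\<forall>y\<in>S \<inter> W. y \<in> A \<longrightarrow> g y \<in> B"
    using \<open>x \<in> S\<close> \<open>open B\<close> \<open>g x \<in> B\<close> unfolding continuous_on_topological by (metis IntI)
  then show "\<exists>A. open A \<and> x \<in> A \<and> (\<forall>y\<in>S. y \<in> A \<longrightarrow> g y \<in> B)"
    using W by (intro exI[of _ "A \<inter> W"]) auto
qed

lemma continuous_on_ball_into_open:
  fixes h :: "'c::metric_space \<Rightarrow> 'd::topological_space"
  assumes "continuous_on S h" "a \<in> S" "open B" "h a \<in> B"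
  obtains d where "d > 0" "\<And>x. x \<in> S \<Longrightarrow> dist x a < d \<Longrightarrow> h x \<in> B"
proof -
  have "openin (top_of_set S) (S \<inter> h -` B)"
    using assms(1,3) by (rule continuous_openin_preimage_gen)
  then show ?thesis
    using that assms(2,4) unfolding openin_euclidean_subtopology_iff by (force simp: dist_commute)
qed

lemma continuous_on_Times_ball_into_open:
  fixes H :: "'c::metric_space \<times> 'd::metric_space \<Rightarrow> 'e::topological_space"
  assumes "continuous_on (U \<times> I) H" "y \<in> U" "s \<in> I" "open B" "H (y, s) \<in> B"
  obtains d where "d > 0"
    "\<And>y' s'. y' \<in> U \<Longrightarrow> s' \<in> I \<Longrightarrow> dist y' y < d \<Longrightarrow> dist s' s < d \<Longrightarrow> H (y', s') \<in> B"
proof -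
  obtain e where e: "e > 0" "\<And>z. z \<in> U \<times> I \<Longrightarrow> dist z (y, s) < e \<Longrightarrow> H z \<in> B"
    using continuous_on_ball_into_open[OF assms(1) _ assms(4,5)] assms(2,3) by blast
  show ?thesis
  proof (rule that[of "e/2"])
    fix y' s' assume "y' \<in> U" "s' \<in> I" "dist y' y < e/2" "dist s' s < e/2"
    moreover have "dist (y', s') (y, s) \<le> \<bar>dist y' y\<bar> + \<bar>dist s' s\<bar>"
      unfolding dist_Pair_Pair by (rule sqrt_sum_squares_le_sum_abs)
    ultimately show "H (y', s') \<in> B"
      using e(2) by auto
  qed (use e in auto)
qed

lemma unit_interval_continuation:
  fixes A :: "real set"
  assumes "0 \<in> A" "A \<subseteq> {0..1}"
    and step: "\<And>s. s \<in> {0..1} \<Longrightarrow> \<forall>t\<in>A. t \<le> s \<Longrightarrow> s \<in> closure A \<Longrightarrow> \<exists>d>0. min (s + d) 1 \<in> A"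
  shows "1 \<in> A"
proof -
  have "A \<noteq> {}" "bdd_above A"
    using assms(1,2) by (auto intro!: bdd_aboveI[of _ 1])
  have upper: "\<forall>t\<in>A. t \<le> Sup A"
    using \<open>bdd_above A\<close> by (auto intro: cSup_upper)
  have "Sup A \<le> 1"
    using \<open>A \<noteq> {}\<close> by (rule cSup_least) (use assms(2) in auto)
  then have "Sup A \<in> {0..1}"
    using upper assms(1) by auto
  moreover have "Sup A \<in> closure A"
    using \<open>A \<noteq> {}\<close> \<open>bdd_above A\<close> by (rule closure_contains_Sup)
  ultimately obtain d where d: "d > 0" "min (Sup A + d) 1 \<in> A"
    using step upper by blast
  then have "min (Sup A + d) 1 \<le> Sup A"
    using upper by blast
  then have "min (Sup A + d) 1 = 1"
    using d(1) by linarith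
  with d(2) show ?thesis
    by simp
qed

section \<open>Lifts through a local homeomorphism\<close>

definition is_lift_on ::
    "'a::topological_space set \<Rightarrow> ('a \<Rightarrow> 'b) \<Rightarrow> 'c::topological_space set \<Rightarrow> ('c \<Rightarrow> 'b) \<Rightarrow> ('c \<Rightarrow> 'a) \<Rightarrow> bool"
  where "is_lift_on X f S p q \<longleftrightarrow> continuous_on S q \<and> q ` S \<subseteq> X \<and> (\<forall>t\<in>S. f (q t) = p t)"

lemma is_lift_on_subset: "is_lift_on X f S p q \<Longrightarrow> S' \<subseteq> S \<Longrightarrow> is_lift_on X f S' p q"
  unfolding is_lift_on_def by (meson continuous_on_subset image_mono order_trans subsetD)

lemma local_homeomorphism_chartE:
  assumes "local_homeomorphism X f Y" "x \<in> X"
  obtains B C g where "open B" "open C" "x \<in> B" "homeomorphism (X \<inter> B) (Y \<inter> C) f g"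
proof -
  obtain T V g where T: "x \<in> T" "openin (top_of_set X) T" "openin (top_of_set Y) V" "homeomorphism T V f g"
    using assms unfolding local_homeomorphism_def by blast
  obtain B C where "open B" "T = X \<inter> B" "open C" "V = Y \<inter> C"
    using T(2,3) by (auto simp: openin_open)
  with T(1,4) show ?thesis
    using that by blast
qed

lemma is_lift_on_unique:
  fixes X :: "'a::metric_space set"
  assumes lh: "local_homeomorphism X f Y" and "connected S"
    and q1: "is_lift_on X f S p q1" and q2: "is_lift_on X f S p q2"
    and "a \<in> S" "q1 a = q2 a" "t \<in> S"
  shows "q1 t = q2 t"
proof -
  define E where "E = {t\<in>S. q1 t = q2 t}"
  have c1: "continuous_on S q1" and c2: "continuous_on S q2"
    using q1 q2 by (auto simp: is_lift_on_def)
  have "closedin (top_of_set S) {t\<in>S. dist (q1 t) (q2 t) = 0}"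
    by (intro continuous_closedin_preimage_constant continuous_intros c1 c2)
  then have "closedin (top_of_set S) E"
    by (simp add: E_def)
  moreover have "openin (top_of_set S) E"
    unfolding openin_subopen[of _ E]
  proof
    fix t assume "t \<in> E"
    then have t: "t \<in> S" "q1 t = q2 t" by (auto simp: E_def)
    then have "q1 t \<in> X" using q1 by (auto simp: is_lift_on_def)
    then obtain B C g where B: "open B" "q1 t \<in> B" and chart: "homeomorphism (X \<inter> B) (Y \<inter> C) f g"
      using lh by (auto elim: local_homeomorphism_chartE)
    define N where "N = (S \<inter> q1 -` B) \<inter> (S \<inter> q2 -` B)"
    have "openin (top_of_set S) N" unfolding N_def
      by (intro openin_Int continuous_openin_preimage_gen c1 c2 B)
    moreover have "t \<in> N" using t B by (auto simp: N_def)
    moreover have "N \<subseteq> E"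
    proof
      fix u assume "u \<in> N"
      then have u: "u \<in> S" "q1 u \<in> X \<inter> B" "q2 u \<in> X \<inter> B"
        using q1 q2 by (auto simp: N_def is_lift_on_def)
      have "q1 u = g (f (q1 u))" using chart u(2) by (simp add: homeomorphism_apply1)
      also have "\<dots> = g (f (q2 u))" using q1 q2 u(1) by (simp add: is_lift_on_def)
      also have "\<dots> = q2 u" using chart u(3) by (simp add: homeomorphism_apply1)
      finally show "u \<in> E" using u(1) by (simp add: E_def)
    qed
    ultimately show "\<exists>N. openin (top_of_set S) N \<and> t \<in> N \<and> N \<subseteq> E" by blast
  qed
  moreover have "E \<noteq> {}" using assms(5,6) by (auto simp: E_def)
  ultimately have "E = S" using \<open>connected S\<close> unfolding connected_clopen by blast
  then show ?thesis using \<open>t \<in> S\<close> by (auto simp: E_def)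
qed

lemma is_lift_on_extend:
  fixes a t1 b :: real
  assumes q: "is_lift_on X f {a..t1} p q" "q t1 \<in> T"
    and chart: "homeomorphism T V f g" "T \<subseteq> X"
    and p: "continuous_on {t1..b} p" "p ` {t1..b} \<subseteq> V"
    and ab: "a \<le> t1" "t1 \<le> b"
  shows "is_lift_on X f {a..b} p (\<lambda>t. if t \<le> t1 then q t else g (p t))"
    (is "is_lift_on X f {a..b} p ?q")
proof -
  have g: "continuous_on V g" "g ` V = T" "\<And>y. y \<in> V \<Longrightarrow> f (g y) = y"
    using chart(1) by (auto simp: homeomorphism_def)
  have "f (q t1) = p t1"
    using q(1) \<open>a \<le> t1\<close> by (auto simp: is_lift_on_def)
  then have q_t1: "g (p t1) = q t1"
    using chart(1) q(2) by (metis homeomorphism_apply1)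
  have "continuous_on {a..t1} ?q"
    using q(1) by (auto simp: is_lift_on_def intro: continuous_on_eq)
  moreover have "continuous_on {t1..b} ?q"
    by (rule continuous_on_eq[OF continuous_on_compose[OF p(1) continuous_on_subset[OF g(1) p(2)]]])
      (auto simp: q_t1)
  ultimately have "continuous_on ({a..t1} \<union> {t1..b}) ?q"
    by (rule continuous_on_closed_Un[rotated 2]) auto
  moreover have "{a..t1} \<union> {t1..b} = {a..b}"
    using ab by auto
  moreover have "?q t \<in> X \<and> f (?q t) = p t" if "t \<in> {a..b}" for t
  proof (cases "t \<le> t1")
    case True
    then show ?thesis using q(1) that by (auto simp: is_lift_on_def)
  next
    case False
    then have "p t \<in> V" using p(2) that by auto
    then show ?thesis using False g(2,3) chart(2) by auto
  qed
  ultimately show ?thesis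
    unfolding is_lift_on_def image_subset_iff by simp
qed

section \<open>Path lifting for weakly proper maps\<close>

text \<open>The only use of weak properness: the partial lifts of \<open>p\<close> from \<open>x\<close> stay in the component
  of \<open>X \<inter> f -` path_image p\<close> containing \<open>x\<close>, which is compact.\<close>

lemma weakly_proper_partial_lifts_endpoint_limit:
  fixes X :: "'a::metric_space set" and Y :: "'b::metric_space set" and t :: "nat \<Rightarrow> real"
  assumes wp: "weakly_proper X f Y" and p: "path p" "path_image p \<subseteq> Y"
    and q: "\<And>n. is_lift_on X f {0..t n} p (q n)" "\<And>n. q n 0 = x"
    and t: "\<And>n. t n \<in> {0..1}" "t \<longlonglongrightarrow> s"
  obtains z r where "z \<in> X" "f z = p s" "strict_mono r" "(\<lambda>n. q (r n) (t (r n))) \<longlonglongrightarrow> z"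
proof -
  define K where "K = path_image p"
  define C where "C = connected_component_set (X \<inter> f -` K) x"
  have "x \<in> X \<inter> f -` K"
    using q[of 0] t(1)[of 0] by (auto simp: is_lift_on_def K_def path_image_def)
  moreover have "compact K"
    using p(1) by (simp add: K_def compact_path_image)
  ultimately have "compact C"
    using wp p(2) unfolding weakly_proper_def C_def K_def by blast
  have "q n ` {0..t n} \<subseteq> C" for n
    unfolding C_def
  proof (rule connected_component_maximal)
    show "x \<in> q n ` {0..t n}"
      using q(2)[of n] t(1)[of n] by (intro image_eqI[of _ _ 0]) auto
    show "connected (q n ` {0..t n})"
      using q(1) by (intro connected_continuous_image) (auto simp: is_lift_on_def)
    have "{0..t n} \<subseteq> {0..1}"
      using t(1)[of n] by auto
    then show "q n ` {0..t n} \<subseteq> X \<inter> f -` K"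
      using q(1)[of n] unfolding is_lift_on_def K_def path_image_def by force
  qed
  then have "\<forall>n. q n (t n) \<in> C"
    using t(1) by (meson atLeastAtMost_iff image_subset_iff order_refl)
  then obtain z r where "z \<in> C" "strict_mono r" and qr: "((\<lambda>n. q n (t n)) \<circ> r) \<longlonglongrightarrow> z"
    by (rule seq_compactE[OF compact_imp_seq_compact[OF \<open>compact C\<close>]])
  moreover have "C \<subseteq> X"
    unfolding C_def using connected_component_subset by blast
  ultimately have "z \<in> X"
    by blast
  have endpoint: "q n (t n) \<in> X \<and> f (q n (t n)) = p (t n)" for n
    using q(1)[of n] t(1)[of n] by (auto simp: is_lift_on_def)
  have "(\<lambda>n. p (t (r n))) \<longlonglongrightarrow> f z"
  proof -
    have "continuous_on X f"
      using wp by (simp add: weakly_proper_def)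
    then have "(\<lambda>n. f (q (r n) (t (r n)))) \<longlonglongrightarrow> f z"
      using qr[unfolded comp_def] \<open>z \<in> X\<close> by (rule continuous_on_tendsto_compose) (simp add: endpoint)
    then show ?thesis
      using endpoint by simp
  qed
  moreover have "(\<lambda>n. p (t (r n))) \<longlonglongrightarrow> p s"
  proof (rule continuous_on_tendsto_compose[of "{0..1}"])
    show "continuous_on {0..1} p"
      using p(1) by (simp add: path_def)
    show "(\<lambda>n. t (r n)) \<longlonglongrightarrow> s"
      using LIMSEQ_subseq_LIMSEQ[OF t(2) \<open>strict_mono r\<close>] by (simp add: comp_def)
    show "s \<in> {0..1}"
      using closed_sequentially[OF closed_atLeastAtMost _ t(2)] t(1) by blast
  qed (intro always_eventually allI t(1))
  ultimately have "f z = p s"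
    by (rule LIMSEQ_unique)
  with \<open>z \<in> X\<close> \<open>strict_mono r\<close> qr show ?thesis
    using that by (auto simp: comp_def)
qed

lemma local_homeomorphism_partial_lift_continue:
  fixes s :: real
  assumes lh: "local_homeomorphism X f Y"
    and p: "continuous_on {0..1} p" "p ` {0..1} \<subseteq> Y" and z: "z \<in> X" "f z = p s" and "s \<in> {0..1}"
  obtains B d where "open B" "z \<in> B" "d > 0"
    "\<And>t1 q. is_lift_on X f {0..t1} p q \<Longrightarrow> q t1 \<in> B \<Longrightarrow> 0 \<le> t1 \<Longrightarrow> s - d < t1 \<Longrightarrow> t1 \<le> s \<Longrightarrow>
       \<exists>q'. is_lift_on X f {0..min (s + d) 1} p q' \<and> q' 0 = q 0"
proof -
  obtain B C g where B: "open B" "z \<in> B" and C: "open C" and chart: "homeomorphism (X \<inter> B) (Y \<inter> C) f g"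
    using lh z(1) by (rule local_homeomorphism_chartE)
  have "p s \<in> C"
    using chart B(2) z by (metis IntD2 IntI homeomorphism_image1 image_eqI)
  then obtain \<delta> where \<delta>: "\<delta> > 0" "\<And>t. t \<in> {0..1} \<Longrightarrow> dist t s < \<delta> \<Longrightarrow> p t \<in> C"
    using continuous_on_ball_into_open[OF p(1) \<open>s \<in> {0..1}\<close> C] by blast
  show ?thesis
  proof (rule that[OF B half_gt_zero[OF \<delta>(1)]])
    fix t1 q
    assume q: "is_lift_on X f {0..t1} p q" "q t1 \<in> B" and t1: "0 \<le> t1" "s - \<delta>/2 < t1" "t1 \<le> s"
    have "is_lift_on X f {0..min (s + \<delta>/2) 1} p (\<lambda>t. if t \<le> t1 then q t else g (p t))"
    proof (rule is_lift_on_extend[OF q(1) _ chart])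
      show "q t1 \<in> X \<inter> B"
        using q t1(1) by (auto simp: is_lift_on_def)
      show "continuous_on {t1..min (s + \<delta>/2) 1} p"
        using t1(1) by (intro continuous_on_subset[OF p(1)]) auto
      show "p ` {t1..min (s + \<delta>/2) 1} \<subseteq> Y \<inter> C"
        using \<delta> t1 p(2) by (auto simp: dist_real_def)
      show "t1 \<le> min (s + \<delta>/2) 1"
        using t1 \<delta>(1) \<open>s \<in> {0..1}\<close> by auto
    qed (use t1 in auto)
    then show "\<exists>q'. is_lift_on X f {0..min (s + \<delta>/2) 1} p q' \<and> q' 0 = q 0"
      using t1(1) by fastforce
  qed
qed

definition has_path_lifting :: "'a::topological_space set \<Rightarrow> ('a \<Rightarrow> 'b) \<Rightarrow> 'b::topological_space set \<Rightarrow> bool"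
  where "has_path_lifting X f Y \<longleftrightarrow> (\<forall>p x. path p \<and> path_image p \<subseteq> Y \<and> x \<in> X \<and> f x = p 0 \<longrightarrow>
    (\<exists>q. is_lift_on X f {0..1} p q \<and> q 0 = x))"

lemma has_path_liftingD:
  "has_path_lifting X f Y \<Longrightarrow> path p \<Longrightarrow> path_image p \<subseteq> Y \<Longrightarrow> x \<in> X \<Longrightarrow> f x = p 0 \<Longrightarrow>
    \<exists>q. is_lift_on X f {0..1} p q \<and> q 0 = x"
  unfolding has_path_lifting_def by blast

lemma local_homeomorphism_weakly_proper_path_lifting:
  fixes X :: "'a::metric_space set" and Y :: "'b::metric_space set"
  assumes lh: "local_homeomorphism X f Y" and wp: "weakly_proper X f Y"
  shows "has_path_lifting X f Y"
  unfolding has_path_lifting_def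
proof (intro allI impI, elim conjE)
  fix p x assume p: "path p" "path_image p \<subseteq> Y" and x: "x \<in> X" "f x = p 0"
  have pc: "continuous_on {0..1} p" and pY: "p ` {0..1} \<subseteq> Y"
    using p by (auto simp: path_def path_image_def)
  define A where "A = {t\<in>{0..1}. \<exists>q. is_lift_on X f {0..t} p q \<and> q 0 = x}"
  have "1 \<in> A"
  proof (rule unit_interval_continuation)
    show "0 \<in> A"
      using x unfolding A_def is_lift_on_def by (intro CollectI conjI exI[of _ "\<lambda>_. x"]) auto
    show "A \<subseteq> {0..1}"
      by (auto simp: A_def)
    fix s assume s: "s \<in> {0..1}" "\<forall>t\<in>A. t \<le> s" "s \<in> closure A"
    then obtain tt where tt: "\<And>n. tt n \<in> A" "tt \<longlonglongrightarrow> s"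
      unfolding closure_sequential by blast
    have tt01: "tt n \<in> {0..1}" for n
      using tt(1) by (simp add: A_def)
    have "\<forall>n. \<exists>q. is_lift_on X f {0..tt n} p q \<and> q 0 = x"
      using tt(1) by (simp add: A_def)
    then obtain qq where qq: "\<And>n. is_lift_on X f {0..tt n} p (qq n)" "\<And>n. qq n 0 = x"
      by metis
    obtain z r where z: "z \<in> X" "f z = p s" "strict_mono r" "(\<lambda>n. qq (r n) (tt (r n))) \<longlonglongrightarrow> z"
      by (rule weakly_proper_partial_lifts_endpoint_limit[OF wp p qq tt01 tt(2)])
    obtain B d where B: "open B" "z \<in> B" "d > 0"
      and continue: "\<And>t1 q. is_lift_on X f {0..t1} p q \<Longrightarrow> q t1 \<in> B \<Longrightarrow> 0 \<le> t1 \<Longrightarrow>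
        s - d < t1 \<Longrightarrow> t1 \<le> s \<Longrightarrow> \<exists>q'. is_lift_on X f {0..min (s + d) 1} p q' \<and> q' 0 = q 0"
      by (rule local_homeomorphism_partial_lift_continue[OF lh pc pY z(1,2) s(1)]) blast
    have ttr: "(\<lambda>n. tt (r n)) \<longlonglongrightarrow> s"
      using LIMSEQ_subseq_LIMSEQ[OF tt(2) z(3)] by (simp add: comp_def)
    have "\<forall>\<^sub>F n in sequentially. qq (r n) (tt (r n)) \<in> B \<and> s - d < tt (r n)"
      using topological_tendstoD[OF z(4) B(1,2)] order_tendstoD(1)[OF ttr, of "s - d"] B(3)
      by (auto intro: eventually_conj)
    then obtain N where "qq (r N) (tt (r N)) \<in> B" "s - d < tt (r N)"
      unfolding eventually_sequentially by blast
    then have "\<exists>q. is_lift_on X f {0..min (s + d) 1} p q \<and> q 0 = x"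
      using continue[OF qq(1)] s(2) tt tt01 qq(2) by auto
    then show "\<exists>d>0. min (s + d) 1 \<in> A"
      using s(1) B(3) unfolding A_def by auto
  qed
  then show "\<exists>q. is_lift_on X f {0..1} p q \<and> q 0 = x"
    unfolding A_def by auto
qed

lemma P_connected_imp_path_connected:
  assumes "\<forall>p\<in>P. path p \<and> path_image p \<subseteq> Y" "P_connected P Y"
  shows "path_connected Y"
  using assms unfolding P_connected_def path_connected_def pathstart_def pathfinish_def by blast

lemma path_lifting_imp_surjective:
  assumes "path_connected Y" "X \<noteq> {}" "f ` X \<subseteq> Y" "has_path_lifting X f Y"
  shows "f ` X = Y"
proof
  show "Y \<subseteq> f ` X"
  proof
    fix y assume "y \<in> Y"
    obtain x where "x \<in> X"
      using assms(2) by blast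
    then obtain p where "path p" "path_image p \<subseteq> Y" "p 0 = f x" "p 1 = y"
      using assms(1,3) \<open>y \<in> Y\<close> unfolding path_connected_def pathstart_def pathfinish_def by blast
    then obtain q where "is_lift_on X f {0..1} p q"
      using has_path_liftingD[OF assms(4)] \<open>x \<in> X\<close> by metis
    then show "y \<in> f ` X"
      using \<open>p 1 = y\<close> unfolding is_lift_on_def by (metis atLeastAtMost_iff image_eqI image_subset_iff order_refl zero_le_one)
  qed
qed (rule assms(3))

section \<open>Lifting continuous families of paths\<close>

lemma lift_family_extend:
  fixes X :: "'a::metric_space set" and U :: "'c::topological_space set" and t1 b :: real
  assumes lh: "local_homeomorphism X f Y"
    and L: "\<And>y. y \<in> U \<Longrightarrow> is_lift_on X f {0..1} (\<lambda>t. H (y, t)) (L y)"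
    and H: "continuous_on (U \<times> {0..1}) H"
    and chart: "homeomorphism T V f g" "T \<subseteq> X"
    and G: "continuous_on (U \<times> {0..t1}) (\<lambda>(y, t). L y t)"
    and LT: "\<And>y. y \<in> U \<Longrightarrow> L y t1 \<in> T"
    and HV: "\<And>y t. y \<in> U \<Longrightarrow> t \<in> {t1..b} \<Longrightarrow> H (y, t) \<in> V"
    and t1b: "0 \<le> t1" "t1 \<le> b" "b \<le> 1"
  shows "continuous_on (U \<times> {0..b}) (\<lambda>(y, t). L y t)"
proof -
  have g: "continuous_on V g" "g ` V = T" "\<And>v. v \<in> V \<Longrightarrow> f (g v) = v"
    using chart(1) by (auto simp: homeomorphism_def)
  have sub: "{t1..b} \<subseteq> {0..1}"
    using t1b by auto
  have on_chart: "L y t = g (H (y, t))" if y: "y \<in> U" and t: "t \<in> {t1..b}" for y t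
  proof (rule is_lift_on_unique[OF lh connected_Icc])
    show "is_lift_on X f {t1..b} (\<lambda>t. H (y, t)) (L y)"
      using L[OF y] sub by (rule is_lift_on_subset)
    have "continuous_on {t1..b} (\<lambda>t. H (y, t))"
      using y sub by (intro continuous_on_compose2[OF H]) (auto intro!: continuous_intros)
    then show "is_lift_on X f {t1..b} (\<lambda>t. H (y, t)) (\<lambda>t. g (H (y, t)))"
      unfolding is_lift_on_def using HV[OF y] g chart(2)
      by (auto intro!: continuous_on_compose2[OF g(1)])
    have "L y t1 \<in> X \<and> f (L y t1) = H (y, t1)"
      using L[OF y] \<open>0 \<le> t1\<close> \<open>t1 \<le> b\<close> \<open>b \<le> 1\<close> by (auto simp: is_lift_on_def)
    then show "L y t1 = g (H (y, t1))"
      using LT[OF y] chart(1) by (metis homeomorphism_apply1)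
  qed (use t \<open>t1 \<le> b\<close> in auto)
  have "continuous_on (U \<times> {t1..b}) (g \<circ> H)"
    using sub HV by (intro continuous_on_compose continuous_on_subset[OF H] continuous_on_subset[OF g(1)]) auto
  then have "continuous_on (U \<times> {t1..b}) (\<lambda>(y, t). L y t)"
    by (rule continuous_on_eq) (auto simp: on_chart)
  moreover have "closedin (top_of_set (U \<times> {0..b})) (U \<times> {0..t1})"
    "closedin (top_of_set (U \<times> {0..b})) (U \<times> {t1..b})"
    using \<open>t1 \<le> b\<close> \<open>0 \<le> t1\<close> by (auto intro!: closedin_Times closed_subset[of "{_.._}"])
  moreover have "U \<times> {0..b} = U \<times> {0..t1} \<union> U \<times> {t1..b}"
    using \<open>t1 \<le> b\<close> \<open>0 \<le> t1\<close> by auto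
  ultimately show ?thesis
    using G continuous_on_Un_local by metis
qed

lemma lift_family_continue:
  fixes X :: "'a::metric_space set" and Y :: "'b::metric_space set" and U :: "'c::metric_space set"
    and s :: real
  assumes lh: "local_homeomorphism X f Y"
    and H: "continuous_on (U \<times> {0..1}) H" "H ` (U \<times> {0..1}) \<subseteq> Y"
    and L: "\<And>y. y \<in> U \<Longrightarrow> is_lift_on X f {0..1} (\<lambda>t. H (y, t)) (L y)"
    and "y1 \<in> U" "s \<in> {0..1}"
  obtains d where "d > 0"
    "\<And>t1 W0. open W0 \<Longrightarrow> y1 \<in> W0 \<Longrightarrow> continuous_on ((U \<inter> W0) \<times> {0..t1}) (\<lambda>(y, t). L y t) \<Longrightarrow>
      0 \<le> t1 \<Longrightarrow> s - d < t1 \<Longrightarrow> t1 \<le> s \<Longrightarrow>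
      \<exists>W. open W \<and> y1 \<in> W \<and> continuous_on ((U \<inter> W) \<times> {0..min (s + d) 1}) (\<lambda>(y, t). L y t)"
proof -
  have Ly1: "continuous_on {0..1} (L y1)" "L y1 s \<in> X" "f (L y1 s) = H (y1, s)"
    using L[OF \<open>y1 \<in> U\<close>] \<open>s \<in> {0..1}\<close> by (auto simp: is_lift_on_def)
  obtain B C g where B: "open B" "L y1 s \<in> B" and C: "open C"
    and chart: "homeomorphism (X \<inter> B) (Y \<inter> C) f g"
    using lh Ly1(2) by (rule local_homeomorphism_chartE)
  have "H (y1, s) \<in> C"
    using chart B(2) Ly1(2,3) by (metis IntD2 IntI homeomorphism_image1 image_eqI)
  then obtain \<delta>2 where \<delta>2: "\<delta>2 > 0"
    "\<And>y t. y \<in> U \<Longrightarrow> t \<in> {0..1} \<Longrightarrow> dist y y1 < \<delta>2 \<Longrightarrow> dist t s < \<delta>2 \<Longrightarrow> H (y, t) \<in> C"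
    using continuous_on_Times_ball_into_open[OF H(1) \<open>y1 \<in> U\<close> \<open>s \<in> {0..1}\<close> C] by blast
  obtain \<delta>1 where \<delta>1: "\<delta>1 > 0" "\<And>t. t \<in> {0..1} \<Longrightarrow> dist t s < \<delta>1 \<Longrightarrow> L y1 t \<in> B"
    using continuous_on_ball_into_open[OF Ly1(1) \<open>s \<in> {0..1}\<close> B(1,2)] by blast
  define d where "d = min \<delta>1 \<delta>2 / 2"
  show ?thesis
  proof (rule that)
    show "d > 0" using \<delta>1 \<delta>2 by (simp add: d_def)
    fix t1 W0
    assume W0: "open W0" "y1 \<in> W0" "continuous_on ((U \<inter> W0) \<times> {0..t1}) (\<lambda>(y, t). L y t)"
      and t1: "0 \<le> t1" "s - d < t1" "t1 \<le> s"
    have "continuous_on (U \<inter> W0) ((\<lambda>(y, t). L y t) \<circ> (\<lambda>y. (y, t1)))"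
      using t1(1) by (intro continuous_on_compose continuous_on_subset[OF W0(3)])
        (auto intro!: continuous_intros)
    then have "continuous_on (U \<inter> W0) (\<lambda>y. L y t1)"
      by (simp add: comp_def)
    moreover have "L y1 t1 \<in> B"
      using \<delta>1 t1 \<open>s \<in> {0..1}\<close> by (auto simp: d_def dist_real_def)
    ultimately obtain e where e: "e > 0" "\<And>y. y \<in> U \<inter> W0 \<Longrightarrow> dist y y1 < e \<Longrightarrow> L y t1 \<in> B"
      using continuous_on_ball_into_open[of "U \<inter> W0" _ y1 B] \<open>y1 \<in> U\<close> W0(2) B(1) by blast
    define W where "W = W0 \<inter> ball y1 (min d e)"
    have "continuous_on ((U \<inter> W) \<times> {0..min (s + d) 1}) (\<lambda>(y, t). L y t)"
    proof (rule lift_family_extend[OF lh _ _ chart])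
      show "is_lift_on X f {0..1} (\<lambda>t. H (y, t)) (L y)" if "y \<in> U \<inter> W" for y
        using L that by blast
      show "continuous_on ((U \<inter> W) \<times> {0..1}) H"
        by (rule continuous_on_subset[OF H(1)]) auto
      show "continuous_on ((U \<inter> W) \<times> {0..t1}) (\<lambda>(y, t). L y t)"
        by (rule continuous_on_subset[OF W0(3)]) (auto simp: W_def)
      show "L y t1 \<in> X \<inter> B" if "y \<in> U \<inter> W" for y
        using e(2)[of y] that L[of y] t1 \<open>s \<in> {0..1}\<close>
        by (auto simp: W_def dist_commute is_lift_on_def)
      show "H (y, t) \<in> Y \<inter> C" if "y \<in> U \<inter> W" "t \<in> {t1..min (s + d) 1}" for y t
        using \<delta>2(2)[of y t] that t1 H(2) \<open>s \<in> {0..1}\<close>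
        by (auto simp: W_def d_def dist_commute dist_real_def)
    qed (use t1 \<open>d > 0\<close> \<open>s \<in> {0..1}\<close> in auto)
    moreover have "open W" "y1 \<in> W"
      using W0 e(1) \<open>d > 0\<close> by (auto simp: W_def)
    ultimately show "\<exists>W. open W \<and> y1 \<in> W \<and> continuous_on ((U \<inter> W) \<times> {0..min (s + d) 1}) (\<lambda>(y, t). L y t)"
      by blast
  qed
qed

lemma lift_family_continuous_near:
  fixes X :: "'a::metric_space set" and Y :: "'b::metric_space set" and U :: "'c::metric_space set"
    and L :: "'c \<Rightarrow> real \<Rightarrow> 'a"
  assumes lh: "local_homeomorphism X f Y"
    and H: "continuous_on (U \<times> {0..1}) H" "H ` (U \<times> {0..1}) \<subseteq> Y"
    and L: "\<And>y. y \<in> U \<Longrightarrow> is_lift_on X f {0..1} (\<lambda>t. H (y, t)) (L y)" "\<And>y. y \<in> U \<Longrightarrow> L y 0 = x0"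
    and "y1 \<in> U"
  obtains W where "open W" "y1 \<in> W" "continuous_on ((U \<inter> W) \<times> {0..1}) (\<lambda>(y, t). L y t)"
proof -
  define A where "A = {r\<in>{0..1}. \<exists>W. open W \<and> y1 \<in> W \<and> continuous_on ((U \<inter> W) \<times> {0..r}) (\<lambda>(y, t). L y t)}"
  have "1 \<in> A"
  proof (rule unit_interval_continuation)
    have "continuous_on (U \<times> {0..0}) (\<lambda>(y, t). L y t)"
      by (rule continuous_on_eq[OF continuous_on_const[of _ x0]]) (auto simp: L(2))
    then show "0 \<in> A"
      unfolding A_def by (auto intro!: exI[of _ UNIV])
    show "A \<subseteq> {0..1}"
      by (auto simp: A_def)
    fix s assume s: "s \<in> {0..1}" "\<forall>t\<in>A. t \<le> s" "s \<in> closure A"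
    obtain d where "d > 0" and continue: "\<And>t1 W0. open W0 \<Longrightarrow> y1 \<in> W0 \<Longrightarrow>
        continuous_on ((U \<inter> W0) \<times> {0..t1}) (\<lambda>(y, t). L y t) \<Longrightarrow> 0 \<le> t1 \<Longrightarrow> s - d < t1 \<Longrightarrow> t1 \<le> s \<Longrightarrow>
        \<exists>W. open W \<and> y1 \<in> W \<and> continuous_on ((U \<inter> W) \<times> {0..min (s + d) 1}) (\<lambda>(y, t). L y t)"
      by (rule lift_family_continue[OF lh H L(1) \<open>y1 \<in> U\<close> s(1)]) (assumption | rule that)+
    obtain t1 where "t1 \<in> A" "dist t1 s < d"
      using s(3) \<open>d > 0\<close> unfolding closure_approachable by blast
    then have "min (s + d) 1 \<in> A"
      using continue[of _ t1] s \<open>d > 0\<close> unfolding A_def by (auto simp: dist_real_def)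
    then show "\<exists>d>0. min (s + d) 1 \<in> A"
      using \<open>d > 0\<close> by blast
  qed
  then show ?thesis
    using that unfolding A_def by auto
qed

lemma lift_family_continuous:
  fixes X :: "'a::metric_space set" and Y :: "'b::metric_space set" and U :: "'c::metric_space set"
    and L :: "'c \<Rightarrow> real \<Rightarrow> 'a"
  assumes lh: "local_homeomorphism X f Y"
    and H: "continuous_on (U \<times> {0..1}) H" "H ` (U \<times> {0..1}) \<subseteq> Y"
    and L: "\<And>y. y \<in> U \<Longrightarrow> is_lift_on X f {0..1} (\<lambda>t. H (y, t)) (L y)" "\<And>y. y \<in> U \<Longrightarrow> L y 0 = x0"
  shows "continuous_on (U \<times> {0..1}) (\<lambda>(y, t). L y t)"
proof (rule continuous_on_open_localI)
  fix z :: "'c \<times> real"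
  assume "z \<in> U \<times> {0..1}"
  then obtain W where "open W" "fst z \<in> W" "continuous_on ((U \<inter> W) \<times> {0..1}) (\<lambda>(y, t). L y t)"
    using lift_family_continuous_near[OF lh H L] by (metis mem_Times_iff)
  moreover have "U \<times> {0..1} \<inter> W \<times> UNIV = (U \<inter> W) \<times> {0..1}"
    by auto
  ultimately show "\<exists>W'. open W' \<and> z \<in> W' \<and> continuous_on (U \<times> {0..1} \<inter> W') (\<lambda>(y, t). L y t)"
    by (metis open_Times open_UNIV mem_Times_iff UNIV_I prod.collapse)
qed

section \<open>Sheets over a contractible neighbourhood\<close>

lemma section_image_homeomorphism:
  assumes "continuous_on X f" "continuous_on U s" "s ` U \<subseteq> X" "\<And>y. y \<in> U \<Longrightarrow> f (s y) = y"
  shows "homeomorphism (s ` U) U f s"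
  unfolding homeomorphism_def using assms by (force intro: continuous_on_subset)

lemma local_homeomorphism_section_image_openin:
  assumes lh: "local_homeomorphism X f Y" and U: "openin (top_of_set Y) U"
    and s: "continuous_on U s" "s ` U \<subseteq> X" "\<And>y. y \<in> U \<Longrightarrow> f (s y) = y"
  shows "openin (top_of_set X) (s ` U)"
  unfolding openin_subopen[of _ "s ` U"]
proof
  fix x assume "x \<in> s ` U"
  then obtain y where y: "y \<in> U" "x = s y" by blast
  then have "x \<in> X" using s(2) by blast
  then obtain B C h where B: "open B" "x \<in> B" and chart: "homeomorphism (X \<inter> B) (Y \<inter> C) f h"
    using lh by (auto elim: local_homeomorphism_chartE)
  have "openin (top_of_set Y) (U \<inter> s -` B)"
    using U continuous_openin_preimage_gen[OF s(1) B(1)] openin_trans by blast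
  then obtain M where M: "open M" "U \<inter> s -` B = Y \<inter> M" by (auto simp: openin_open)
  have "f ` X \<subseteq> Y" "continuous_on X f"
    using lh by (auto simp: local_homeomorphism_def)
  define N where "N = (X \<inter> B) \<inter> (X \<inter> f -` M)"
  have "y \<in> Y \<inter> M"
    using y B(2) M(2) by blast
  then have "x \<in> N"
    using y B(2) \<open>x \<in> X\<close> s(3) unfolding N_def by auto
  moreover have "openin (top_of_set X) N"
    unfolding N_def using B(1) M(1) \<open>continuous_on X f\<close>
    by (intro openin_Int openin_open_Int continuous_openin_preimage_gen)
  moreover have "N \<subseteq> s ` U"
  proof
    fix w assume "w \<in> N"
    then have w: "w \<in> X \<inter> B" "f w \<in> M"
      by (auto simp: N_def)
    then have "f w \<in> U" "s (f w) \<in> X \<inter> B"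
      using M \<open>f ` X \<subseteq> Y\<close> s(2,3) by auto
    have "w = h (f w)" using chart w(1) by (simp add: homeomorphism_apply1)
    also have "\<dots> = h (f (s (f w)))" using s(3) \<open>f w \<in> U\<close> by simp
    also have "\<dots> = s (f w)" using chart \<open>s (f w) \<in> X \<inter> B\<close> by (simp add: homeomorphism_apply1)
    finally show "w \<in> s ` U" using \<open>f w \<in> U\<close> by blast
  qed
  ultimately show "\<exists>N. openin (top_of_set X) N \<and> x \<in> N \<and> N \<subseteq> s ` U"
    by blast
qed

locale lifted_contraction =
  fixes X :: "'a::metric_space set" and f :: "'a \<Rightarrow> 'b::metric_space" and Y U :: "'b set"
    and H :: "'b \<times> real \<Rightarrow> 'b" and y0 :: 'b
  assumes lh: "local_homeomorphism X f Y"
    and lifting: "has_path_lifting X f Y"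
    and U: "openin (top_of_set Y) U"
    and H: "continuous_on (U \<times> {0..1}) H" "H ` (U \<times> {0..1}) \<subseteq> Y"
    and H_start: "\<And>y. y \<in> U \<Longrightarrow> H (y, 0) = y0"
    and H_end: "\<And>y. y \<in> U \<Longrightarrow> H (y, 1) = y"
begin

definition lift_from :: "'a \<Rightarrow> 'b \<Rightarrow> real \<Rightarrow> 'a"
  where "lift_from x y = (SOME q. is_lift_on X f {0..1} (\<lambda>t. H (y, t)) q \<and> q 0 = x)"

definition sheet_section :: "'a \<Rightarrow> 'b \<Rightarrow> 'a"
  where "sheet_section x y = lift_from x y 1"

lemma path_contraction: "y \<in> U \<Longrightarrow> path (\<lambda>t. H (y, t)) \<and> path_image (\<lambda>t. H (y, t)) \<subseteq> Y"
  unfolding path_def path_image_def using H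
  by (auto intro!: continuous_on_compose2[OF H(1)] continuous_intros)

lemma lift_from:
  assumes "x \<in> X" "f x = y0" "y \<in> U"
  shows "is_lift_on X f {0..1} (\<lambda>t. H (y, t)) (lift_from x y)" "lift_from x y 0 = x"
proof -
  have "\<exists>q. is_lift_on X f {0..1} (\<lambda>t. H (y, t)) q \<and> q 0 = x"
    using path_contraction[OF assms(3)] assms by (intro has_path_liftingD[OF lifting]) (auto simp: H_start)
  then have "is_lift_on X f {0..1} (\<lambda>t. H (y, t)) (lift_from x y) \<and> lift_from x y 0 = x"
    unfolding lift_from_def by (rule someI_ex)
  then show "is_lift_on X f {0..1} (\<lambda>t. H (y, t)) (lift_from x y)" "lift_from x y 0 = x"
    by auto
qed

lemma sheet_section: "x \<in> X \<Longrightarrow> f x = y0 \<Longrightarrow> y \<in> U \<Longrightarrow> sheet_section x y \<in> X \<and> f (sheet_section x y) = y"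
  using lift_from(1)[of x y] by (auto simp: is_lift_on_def sheet_section_def H_end)

lemma sheet_section_continuous:
  assumes "x \<in> X" "f x = y0"
  shows "continuous_on U (sheet_section x)"
proof -
  have lifts: "continuous_on (U \<times> {0..1}) (\<lambda>(y, t). lift_from x y t)"
    using lift_from assms by (intro lift_family_continuous[OF lh H]) auto
  have "continuous_on U ((\<lambda>(y, t). lift_from x y t) \<circ> (\<lambda>y. (y, 1)))"
    by (intro continuous_on_compose continuous_on_subset[OF lifts]) (auto intro!: continuous_intros)
  then show ?thesis
    by (simp add: comp_def sheet_section_def)
qed

lemma sheet_section_eqD:
  assumes x: "x1 \<in> X" "f x1 = y0" "x2 \<in> X" "f x2 = y0" and y: "y1 \<in> U" "y2 \<in> U"
    and eq: "sheet_section x1 y1 = sheet_section x2 y2"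
  shows "x1 = x2"
proof -
  have "y1 = y2"
    using sheet_section[OF x(1,2) y(1)] sheet_section[OF x(3,4) y(2)] eq by simp
  have "lift_from x1 y1 0 = lift_from x2 y1 0"
    by (rule is_lift_on_unique[OF lh connected_Icc lift_from(1)[OF x(1,2) y(1)]
          lift_from(1)[OF x(3,4) y(1)], where a = 1])
      (use eq \<open>y1 = y2\<close> in \<open>auto simp: sheet_section_def\<close>)
  then show ?thesis
    using lift_from(2) x y(1) by simp
qed

text \<open>A point \<open>x'\<close> over \<open>y \<in> U\<close> lies on the sheet through the endpoint of the lift of
  the reversed contraction path of \<open>y\<close> from \<open>x'\<close>.\<close>

lemma sheet_section_onto:
  assumes "x' \<in> X" "f x' \<in> U"
  obtains x where "x \<in> X" "f x = y0" "sheet_section x (f x') = x'"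
proof -
  define y where "y = f x'"
  have "path (reversepath (\<lambda>t. H (y, t)))" "path_image (reversepath (\<lambda>t. H (y, t))) \<subseteq> Y"
    using path_contraction assms by (auto simp: y_def)
  moreover have "f x' = reversepath (\<lambda>t. H (y, t)) 0"
    using assms H_end by (simp add: y_def reversepath_def)
  ultimately obtain q where q: "is_lift_on X f {0..1} (reversepath (\<lambda>t. H (y, t))) q" "q 0 = x'"
    using has_path_liftingD[OF lifting _ _ assms(1)] by blast
  have rq: "is_lift_on X f {0..1} (\<lambda>t. H (y, t)) (reversepath q)"
    using q(1) unfolding is_lift_on_def reversepath_def
    by (auto intro!: continuous_on_compose2[of "{0..1}" q] continuous_intros)
  have x: "q 1 \<in> X" "f (q 1) = y0"
    using q(1) H_start assms by (auto simp: is_lift_on_def reversepath_def y_def)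
  have "lift_from (q 1) y 1 = reversepath q 1"
    by (rule is_lift_on_unique[OF lh connected_Icc lift_from(1)[OF x] rq, where a = 0])
      (use lift_from(2)[OF x] assms(2) in \<open>auto simp: y_def reversepath_def\<close>)
  then have "sheet_section (q 1) (f x') = x'"
    using q(2) by (simp add: sheet_section_def y_def reversepath_def)
  with x show ?thesis
    by (rule that)
qed

lemma evenly_covered:
  "\<exists>v. \<Union>v = X \<inter> f -` U \<and> (\<forall>u \<in> v. openin (top_of_set X) u) \<and> pairwise disjnt v \<and>
    (\<forall>u \<in> v. \<exists>q. homeomorphism u U f q)"
proof (intro exI conjI)
  define v where "v = (\<lambda>x. sheet_section x ` U) ` (X \<inter> f -` {y0})"
  have fcont: "continuous_on X f"
    using lh by (simp add: local_homeomorphism_def)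
  show "\<Union>v = X \<inter> f -` U"
  proof
    show "\<Union>v \<subseteq> X \<inter> f -` U"
      unfolding v_def using sheet_section by auto
    show "X \<inter> f -` U \<subseteq> \<Union>v"
    proof
      fix x' assume x': "x' \<in> X \<inter> f -` U"
      then have "x' \<in> X" "f x' \<in> U"
        by auto
      then obtain x where "x \<in> X" "f x = y0" "sheet_section x (f x') = x'"
        by (rule sheet_section_onto)
      then have "x' \<in> sheet_section x ` U" "sheet_section x ` U \<in> v"
        using \<open>f x' \<in> U\<close> unfolding v_def by force+
      then show "x' \<in> \<Union>v"
        by (rule UnionI[rotated])
    qed
  qed
  show "\<forall>u \<in> v. openin (top_of_set X) u"
    unfolding v_def using sheet_section sheet_section_continuous
    by (auto intro!: local_homeomorphism_section_image_openin[OF lh U])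
  show "pairwise disjnt v"
  proof (rule pairwiseI)
    fix u1 u2 assume "u1 \<in> v" "u2 \<in> v" "u1 \<noteq> u2"
    then obtain x1 x2 where x: "x1 \<in> X" "f x1 = y0" "x2 \<in> X" "f x2 = y0"
      and u: "u1 = sheet_section x1 ` U" "u2 = sheet_section x2 ` U"
      by (auto simp: v_def)
    then show "disjnt u1 u2"
      using sheet_section_eqD[OF x] \<open>u1 \<noteq> u2\<close> unfolding disjnt_def by auto
  qed
  show "\<forall>u \<in> v. \<exists>q. homeomorphism u U f q"
  proof
    fix u assume "u \<in> v"
    then obtain x where x: "x \<in> X" "f x = y0" and u: "u = sheet_section x ` U"
      by (auto simp: v_def)
    have "homeomorphism u U f (sheet_section x)"
      unfolding u using sheet_section[OF x]
      by (intro section_image_homeomorphism[OF fcont sheet_section_continuous[OF x]]) auto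
    then show "\<exists>q. homeomorphism u U f q"
      by blast
  qed
qed

end

lemma locally_P_contractible_evenly_covered:
  fixes X :: "'a::metric_space set" and Y :: "'b::metric_space set" and P :: "(real \<Rightarrow> 'b) set"
  assumes lh: "local_homeomorphism X f Y" and lifting: "has_path_lifting X f Y"
    and "locally_P_contractible P Y" "y0 \<in> Y"
  shows "\<exists>T. y0 \<in> T \<and> openin (top_of_set Y) T \<and> (\<exists>v. \<Union>v = X \<inter> f -` T \<and>
    (\<forall>u \<in> v. openin (top_of_set X) u) \<and> pairwise disjnt v \<and> (\<forall>u \<in> v. \<exists>q. homeomorphism u T f q))"
proof -
  have "\<exists>U H. openin (top_of_set Y) U \<and> y0 \<in> U \<and>
      continuous_on (U \<times> {0..1::real}) H \<and> H ` (U \<times> {0..1}) \<subseteq> U \<and>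
      (\<forall>t\<in>{0..1}. H (y0, t) = y0) \<and> (\<forall>y\<in>U. H (y, 0) = y0 \<and> H (y, 1) = y) \<and>
      (\<forall>y\<in>U. path_in_family P (\<lambda>t. H (y, t)))"
    using assms(3,4) unfolding locally_P_contractible_def by (rule bspec)
  then obtain U H where nbhd: "openin (top_of_set Y) U" "y0 \<in> U" "continuous_on (U \<times> {0..1::real}) H"
    "H ` (U \<times> {0..1}) \<subseteq> U" "\<And>y. y \<in> U \<Longrightarrow> H (y, 0) = y0" "\<And>y. y \<in> U \<Longrightarrow> H (y, 1) = y"
    by blast
  have "H ` (U \<times> {0..1}) \<subseteq> Y"
    using nbhd(4) openin_imp_subset[OF nbhd(1)] by blast
  interpret lifted_contraction X f Y U H y0
    by unfold_locales (fact lh lifting nbhd(1,3,5,6) \<open>H ` (U \<times> {0..1}) \<subseteq> Y\<close>)+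
  show ?thesis
    using nbhd(1,2) evenly_covered by (intro exI[of _ U] conjI)
qed

theorem mainTheorem4:
  fixes X :: "'a::metric_space set" and Y :: "'b::metric_space set"
    and P :: "(real \<Rightarrow> 'b) set" and f :: "'a \<Rightarrow> 'b"
  assumes "\<forall>p\<in>P. path p \<and> path_image p \<subseteq> Y"
    and "P_connected P Y"
    and "locally_P_contractible P Y"
    and "X \<noteq> {}"
    and "local_homeomorphism X f Y"
    and "weakly_proper X f Y"
  shows "covering_space X f Y"
proof -
  have lh: "local_homeomorphism X f Y" and wp: "weakly_proper X f Y"
    using assms(5,6) .
  have lifting: "has_path_lifting X f Y"
    using lh wp by (rule local_homeomorphism_weakly_proper_path_lifting)
  show ?thesis
  proof (rule covering_spaceI)
    show "continuous_on X f"
      using lh by (simp add: local_homeomorphism_def)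
    show "f ` X = Y"
      using P_connected_imp_path_connected[OF assms(1,2)] assms(4) lh lifting
      by (intro path_lifting_imp_surjective) (auto simp: local_homeomorphism_def)
  qed (rule locally_P_contractible_evenly_covered[OF lh lifting assms(3)])
qed

end
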